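(* Let $M$ be a matroid on $E$ whose dual is transversal with maximal presentation $\mathcal A=(A_1,\ldots,A_r)$, $r=r^*(M)$; let $e\in E$, and let $G$ be a minimal $(e,\mathcal A)$-presenting graph on vertex set $\mathcal A_e(E)$ for which the identity map is the presenting map. Let $F$ be a cyclic flat of $M\backslash e$ such that $G[\mathcal A_e(F\cup\{e\})]$ contains no cycle. (i) If $|\mathcal A_e(F\cup\{e\})|\le 1$, then $\alpha_{M\backslash e}(F)=|\{i\in\mathcal A(F): A_i=F\}|$. (ii) If $|\mathcal A_e(F\cup\{e\})|>1$, then $\alpha_{M\backslash e}(F)$ equals the number of edges $\{i,j\}$ of $G[\mathcal A_e(F\cup\{e\})]$ such that $\mathrm{cl}_{M\backslash e}(A_i\cup A_j-e)=F$.
   Context: $M^*=M[\mathcal A]$, the transversal matroid whose independent sets are the partial transversals of $\mathcal A$; the presentation is maximal if every $A_i$ is a cyclic flat of $M$ (a flat that is a union of circuits). For $X\subseteq E$: $\mathcal A(X)=\{i\in[r]:A_i\subseteq X\}$, $\mathcal A_e(X)=\{i\in\mathcal A(X): e\in A_i\}$, and $G[U]$ is the subgraph induced by $U$. A graph with vertex set $\mathcal A_e(E)$ is $(e,\mathcal A)$-presenting if for all distinct $i,j\in\mathcal A_e(E)$ the graph $G[\mathcal A_e(\mathrm{cl}_M(A_i\cup A_j))]$ is connected; minimal if deleting any one edge destroys this property. For a matroid $N$ with set $\mathcal Z(N)$ of cyclic flats, $\alpha_N$ is defined recursively on subsets $X\subseteq E(N)$ by $\alpha_N(X)=|X|-r_N(X)-\sum_{F'\in\mathcal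 Z(N),\,F'\subsetneq X}\alpha_N(F')$. *)

theory Defs
  imports Main
begin

definition matroid :: "'a set \<Rightarrow> ('a set \<Rightarrow> bool) \<Rightarrow> bool" where
  "matroid E ind \<longleftrightarrow> finite E \<and> ind {} \<and> (\<forall>X. ind X \<longrightarrow> X \<subseteq> E)
     \<and> (\<forall>X Y. ind X \<and> Y \<subseteq> X \<longrightarrow> ind Y)
     \<and> (\<forall>X Y. ind X \<and> ind Y \<and> card X < card Y \<longrightarrow> (\<exists>y\<in>Y - X. ind (insert y X)))"

definition rank :: "('a set \<Rightarrow> bool) \<Rightarrow> 'a set \<Rightarrow> nat" where
  "rank ind X = Max {card I | I. I \<subseteq> X \<and> ind I}"

definition cl :: "'a set \<Rightarrow> ('a set \<Rightarrow> bool) \<Rightarrow> 'a set \<Rightarrow> 'a set" where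
  "cl E ind X = {x\<in>E. rank ind (insert x X) = rank ind X}"

definition basis :: "('a set \<Rightarrow> bool) \<Rightarrow> 'a set \<Rightarrow> bool" where
  "basis ind B \<longleftrightarrow> ind B \<and> (\<forall>X. ind X \<and> B \<subseteq> X \<longrightarrow> X = B)"

definition circuit :: "'a set \<Rightarrow> ('a set \<Rightarrow> bool) \<Rightarrow> 'a set \<Rightarrow> bool" where
  "circuit E ind C \<longleftrightarrow> C \<subseteq> E \<and> \<not> ind C \<and> (\<forall>x\<in>C. ind (C - {x}))"

definition flat :: "'a set \<Rightarrow> ('a set \<Rightarrow> bool) \<Rightarrow> 'a set \<Rightarrow> bool" where
  "flat E ind X \<longleftrightarrow> X \<subseteq> E \<and> cl E ind X = X"

definition cyclic_flat :: "'a set \<Rightarrow> ('a set \<Rightarrow> bool) \<Rightarrow> 'a set \<Rightarrow> bool" where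
  "cyclic_flat E ind X \<longleftrightarrow> flat E ind X \<and> X = \<Union>{C. circuit E ind C \<and> C \<subseteq> X}"

definition dual_indep :: "'a set \<Rightarrow> ('a set \<Rightarrow> bool) \<Rightarrow> 'a set \<Rightarrow> bool" where
  "dual_indep E ind X \<longleftrightarrow> X \<subseteq> E \<and> (\<exists>B. basis ind B \<and> X \<inter> B = {})"

text \<open>Deletion M \ e (ground set E - {e}).\<close>
definition del_indep :: "('a set \<Rightarrow> bool) \<Rightarrow> 'a \<Rightarrow> 'a set \<Rightarrow> bool" where
  "del_indep ind e X \<longleftrightarrow> ind X \<and> e \<notin> X"

definition partial_transversal :: "'a set \<Rightarrow> (nat \<Rightarrow> 'a set) \<Rightarrow> nat \<Rightarrow> 'a set \<Rightarrow> bool" where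
  "partial_transversal E A r X \<longleftrightarrow> X \<subseteq> E \<and>
     (\<exists>f. inj_on f X \<and> (\<forall>x\<in>X. f x \<in> {1..r} \<and> x \<in> A (f x)))"

definition maximal_presentation :: "'a set \<Rightarrow> ('a set \<Rightarrow> bool) \<Rightarrow> (nat \<Rightarrow> 'a set) \<Rightarrow> nat \<Rightarrow> bool" where
  "maximal_presentation E ind A r \<longleftrightarrow> (\<forall>i\<in>{1..r}. cyclic_flat E ind (A i))"

definition Aset :: "(nat \<Rightarrow> 'a set) \<Rightarrow> nat \<Rightarrow> 'a set \<Rightarrow> nat set" where
  "Aset A r X = {i\<in>{1..r}. A i \<subseteq> X}"

definition Ae :: "(nat \<Rightarrow> 'a set) \<Rightarrow> nat \<Rightarrow> 'a \<Rightarrow> 'a set \<Rightarrow> nat set" where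
  "Ae A r e X = {i\<in>Aset A r X. e \<in> A i}"

definition induced :: "nat set set \<Rightarrow> nat set \<Rightarrow> nat set set" where
  "induced Ed U = {ed\<in>Ed. ed \<subseteq> U}"

definition connected_graph :: "nat set \<Rightarrow> nat set set \<Rightarrow> bool" where
  "connected_graph U Ed \<longleftrightarrow> (\<forall>u\<in>U. \<forall>v\<in>U. (u, v) \<in> {(x, y). {x, y} \<in> Ed}\<^sup>*)"

definition acyclic_graph :: "nat set set \<Rightarrow> bool" where
  "acyclic_graph Ed \<longleftrightarrow> \<not> (\<exists>cs. distinct cs \<and> length cs \<ge> 3 \<and>
      (\<forall>k. Suc k < length cs \<longrightarrow> {cs ! k, cs ! Suc k} \<in> Ed) \<and> {last cs, hd cs} \<in> Ed)"

definition simple_graph_on :: "nat set \<Rightarrow> nat set set \<Rightarrow> bool" where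
  "simple_graph_on V Ed \<longleftrightarrow> (\<forall>ed\<in>Ed. \<exists>i j. i \<in> V \<and> j \<in> V \<and> i \<noteq> j \<and> ed = {i, j})"

definition presenting :: "'a set \<Rightarrow> ('a set \<Rightarrow> bool) \<Rightarrow> (nat \<Rightarrow> 'a set) \<Rightarrow> nat \<Rightarrow> 'a \<Rightarrow> nat set set \<Rightarrow> bool" where
  "presenting E ind A r e Ed \<longleftrightarrow> simple_graph_on (Ae A r e E) Ed \<and>
     (\<forall>i\<in>Ae A r e E. \<forall>j\<in>Ae A r e E. i \<noteq> j \<longrightarrow>
        (let U = Ae A r e (cl E ind (A i \<union> A j)) in connected_graph U (induced Ed U)))"

definition minimal_presenting :: "'a set \<Rightarrow> ('a set \<Rightarrow> bool) \<Rightarrow> (nat \<Rightarrow> 'a set) \<Rightarrow> nat \<Rightarrow> 'a \<Rightarrow> nat set set \<Rightarrow> bool" where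
  "minimal_presenting E ind A r e Ed \<longleftrightarrow> presenting E ind A r e Ed \<and>
     (\<forall>ed\<in>Ed. \<not> presenting E ind A r e (Ed - {ed}))"

function alpha :: "'a set \<Rightarrow> ('a set \<Rightarrow> bool) \<Rightarrow> 'a set \<Rightarrow> int" where
  "alpha E ind X = (if finite X then int (card X) - int (rank ind X)
      - (\<Sum>F\<in>{F. cyclic_flat E ind F \<and> F \<subset> X}. alpha E ind F) else 0)"
  by auto
termination
  by (relation "measure (\<lambda>(E, ind, X). card X)") (auto intro: psubset_card_mono)

end

theory Submission
  imports Defs
begin

text \<open>Write \<open>n(X) = |X| - r(X)\<close> for the nullity. Since the recursion defining \<open>\<alpha>\<close> says that
  \<open>n(F)\<close> is the sum of \<open>\<alpha>(F')\<close> over the cyclic flats \<open>F' \<subseteq> F\<close>, it suffices to find a function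
  \<open>\<phi>\<close> with the same property; we take \<open>\<phi>(F')\<close> to be the number of \<open>i\<close> with \<open>A\<^sub>i = F'\<close> plus the
  number of edges \<open>{i, j}\<close> of \<open>G[\<A>\<^sub>e(F' + e)]\<close> with \<open>cl(A\<^sub>i \<union> A\<^sub>j - e) = F'\<close>.

  For every flat \<open>Z\<close> of \<open>M\<close> we have \<open>n(Z) = |\<A>(Z)|\<close>: its complement has no coloops in the
  transversal matroid \<open>M\<^sup>*\<close>, so a maximum matching of it covers every \<open>A\<^sub>i\<close> meeting it
  (an augmenting-path argument). Each \<open>A\<^sub>i \<subseteq> F\<close> is a cyclic flat of \<open>M \ e\<close>, and by maximality of the
  presentation so is \<open>cl(A\<^sub>i \<union> A\<^sub>j - e)\<close> for every edge; hence summing \<open>\<phi>\<close> over the cyclic flats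
  below \<open>F\<close> gives \<open>|\<A>(F)|\<close> plus the number of edges of \<open>G[\<A>\<^sub>e(F + e)]\<close>. This equals \<open>n(F)\<close>:
  if \<open>e \<notin> cl F\<close> then \<open>F\<close> is a flat of \<open>M\<close> and there are no edges; otherwise \<open>F + e\<close> is a flat of
  \<open>M\<close>, the presenting property makes \<open>G[\<A>\<^sub>e(F + e)]\<close> connected, hence a tree, and
  \<open>n(F) = n(F + e) - 1 = |\<A>(F)| + |\<A>\<^sub>e(F + e)| - 1\<close>.\<close>

lemma finite_rank_cards:
  assumes "finite E" "\<And>J. P J \<Longrightarrow> J \<subseteq> E"
  shows "finite {card J | J. J \<subseteq> X \<and> P J}"
proof -
  have "{card J | J. J \<subseteq> X \<and> P J} \<subseteq> {..card E}"
    using assms card_mono by fastforce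
  then show ?thesis
    using finite_subset by blast
qed

lemma card_le_rank:
  assumes "finite E" "\<And>J. P J \<Longrightarrow> J \<subseteq> E" "I \<subseteq> X" "P I"
  shows "card I \<le> rank P X"
  unfolding rank_def using finite_rank_cards[OF assms(1,2)] assms(3,4) by (auto intro: Max_ge)

lemma rank_attained:
  assumes "finite E" "\<And>J. P J \<Longrightarrow> J \<subseteq> E" "P {}"
  obtains I where "I \<subseteq> X" "P I" "card I = rank P X"
proof -
  let ?cards = "{card J | J. J \<subseteq> X \<and> P J}"
  have "card {} \<in> ?cards"
    using assms(3) by (intro CollectI exI[of _ "{}"]) simp
  then have "Max ?cards \<in> ?cards"
    using Max_in[OF finite_rank_cards[OF assms(1,2)]] by blast
  then obtain I where "Max ?cards = card I" "I \<subseteq> X" "P I"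
    by blast
  then show ?thesis
    by (intro that) (simp_all add: rank_def)
qed

definition nullity :: "('a set \<Rightarrow> bool) \<Rightarrow> 'a set \<Rightarrow> int" where
  "nullity ind X = int (card X) - int (rank ind X)"

lemma card_Diff_Int_split:
  assumes "finite Y" "finite B"
  shows "card Y = card (Y - B) + card (Y \<inter> B)" "card B = card (Y \<inter> B) + card (B - Y)"
  using card_Int_Diff[OF assms(1), of B] card_Int_Diff[OF assms(2), of Y] by (auto simp: Int_commute)

locale finite_matroid =
  fixes E :: "'a set" and ind :: "'a set \<Rightarrow> bool"
  assumes matroid: "matroid E ind"
begin

lemma finite_ground: "finite E"
  using matroid unfolding matroid_def by blast

lemma indep_empty: "ind {}"
  using matroid unfolding matroid_def by blast

lemma indep_subset_ground: "ind X \<Longrightarrow> X \<subseteq> E"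
  using matroid unfolding matroid_def by blast

lemma indep_subset: "ind X \<Longrightarrow> Y \<subseteq> X \<Longrightarrow> ind Y"
  using matroid unfolding matroid_def by blast

lemma indep_augment: "ind X \<Longrightarrow> ind Y \<Longrightarrow> card X < card Y \<Longrightarrow> \<exists>y\<in>Y - X. ind (insert y X)"
  using matroid unfolding matroid_def by blast

lemma indep_finite: "ind X \<Longrightarrow> finite X"
  using indep_subset_ground finite_ground finite_subset by blast

lemma indep_card_le_rank: "I \<subseteq> X \<Longrightarrow> ind I \<Longrightarrow> card I \<le> rank ind X"
  using card_le_rank[where P = ind, OF finite_ground indep_subset_ground] .

lemma maximal_indep_subset:
  obtains I where "I \<subseteq> X" "ind I" "card I = rank ind X"
  using rank_attained[where P = ind, OF finite_ground indep_subset_ground indep_empty] by blast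

lemma rank_mono:
  assumes "X \<subseteq> Y"
  shows "rank ind X \<le> rank ind Y"
proof -
  obtain I where "I \<subseteq> X" "ind I" "card I = rank ind X"
    using maximal_indep_subset .
  then show ?thesis
    using indep_card_le_rank[of I Y] assms by auto
qed

lemma rank_le_card:
  assumes "finite X"
  shows "rank ind X \<le> card X"
proof -
  obtain I where "I \<subseteq> X" "ind I" "card I = rank ind X"
    using maximal_indep_subset .
  then show ?thesis
    using card_mono[OF assms] by metis
qed

lemma rank_indep: "ind X \<Longrightarrow> rank ind X = card X"
  using indep_card_le_rank[of X X] rank_le_card[of X] indep_finite by simp

lemma indep_extend:
  assumes "ind I" "I \<subseteq> X"
  obtains J where "I \<subseteq> J" "J \<subseteq> X" "ind J" "card J = rank ind X"
proof -
  have "\<exists>J. I \<subseteq> J \<and> J \<subseteq> X \<and> ind J \<and> card J = rank ind X"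
    using assms
  proof (induction "rank ind X - card I" arbitrary: I rule: less_induct)
    case less
    show ?case
    proof (cases "card I < rank ind X")
      case True
      obtain K where K: "K \<subseteq> X" "ind K" "card K = rank ind X"
        using maximal_indep_subset by blast
      then obtain y where y: "y \<in> K - I" "ind (insert y I)"
        using indep_augment[of I K] less.prems True by auto
      have "card (insert y I) = Suc (card I)"
        using y indep_finite[of I] less.prems by simp
      then have "\<exists>J. insert y I \<subseteq> J \<and> J \<subseteq> X \<and> ind J \<and> card J = rank ind X"
        using True y K less.prems by (intro less.hyps) auto
      then show ?thesis
        by blast
    next
      case False
      then show ?thesis
        using less.prems indep_card_le_rank[of I X] by (intro exI[of _ I]) auto
    qed
  qed
  then show ?thesis
    using that by blast
qed

lemma rank_insert_eq_iff:
  assumes I: "I \<subseteq> X" "ind I" "card I = rank ind X" and x: "x \<notin> I"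
  shows "rank ind (insert x X) = rank ind X \<longleftrightarrow> \<not> ind (insert x I)"
proof
  assume "rank ind (insert x X) = rank ind X"
  moreover have "card (insert x I) = Suc (card I)"
    using x indep_finite[OF I(2)] by simp
  ultimately show "\<not> ind (insert x I)"
    using indep_card_le_rank[of "insert x I" "insert x X"] I by auto
next
  assume dep: "\<not> ind (insert x I)"
  obtain J where J: "I \<subseteq> J" "J \<subseteq> insert x X" "ind J" "card J = rank ind (insert x X)"
    using indep_extend[OF I(2), of "insert x X"] I(1) by blast
  have "x \<notin> J"
    using dep J indep_subset by blast
  then have "rank ind (insert x X) \<le> rank ind X"
    using J indep_card_le_rank[of J X] by auto
  then show "rank ind (insert x X) = rank ind X"
    using rank_mono[OF subset_insertI] le_antisym by blast
qed

lemma rank_insert_le: "rank ind (insert x X) \<le> Suc (rank ind X)"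
proof -
  obtain J where J: "J \<subseteq> insert x X" "ind J" "card J = rank ind (insert x X)"
    using maximal_indep_subset by blast
  have "card (J - {x}) \<le> rank ind X"
    using J indep_subset by (intro indep_card_le_rank) auto
  moreover have "card J \<le> Suc (card (J - {x}))"
    using indep_finite[OF J(2)] by (cases "x \<in> J") (auto simp: card_Diff_singleton)
  ultimately show ?thesis
    using J by simp
qed

lemma subset_cl: "X \<subseteq> E \<Longrightarrow> X \<subseteq> cl E ind X"
  unfolding cl_def by (auto simp: insert_absorb)

lemma cl_subset_ground: "cl E ind X \<subseteq> E"
  unfolding cl_def by auto

lemma rank_insert_not_cl:
  assumes "x \<in> E" "x \<notin> cl E ind X"
  shows "rank ind (insert x X) = Suc (rank ind X)"
  using assms rank_insert_le[of x X] rank_mono[OF subset_insertI, of X x] unfolding cl_def by fastforce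

lemma cl_mono:
  assumes "X \<subseteq> Y"
  shows "cl E ind X \<subseteq> cl E ind Y"
proof
  fix x
  assume x: "x \<in> cl E ind X"
  show "x \<in> cl E ind Y"
  proof (cases "x \<in> Y")
    case True
    then show ?thesis
      using x unfolding cl_def by (simp add: insert_absorb)
  next
    case False
    obtain I where I: "I \<subseteq> X" "ind I" "card I = rank ind X"
      using maximal_indep_subset by blast
    obtain J where J: "I \<subseteq> J" "J \<subseteq> Y" "ind J" "card J = rank ind Y"
      using indep_extend[OF I(2), of Y] I(1) assms by blast
    have "\<not> ind (insert x I)"
      using x rank_insert_eq_iff[OF I, of x] False I(1) assms unfolding cl_def by auto
    then have "\<not> ind (insert x J)"
      using J(1) indep_subset by blast
    then show ?thesis
      using x rank_insert_eq_iff[OF J(2-4), of x] False J(2) unfolding cl_def by auto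
  qed
qed

lemma rank_cl:
  assumes "X \<subseteq> E"
  shows "rank ind (cl E ind X) = rank ind X"
proof -
  obtain I where I: "I \<subseteq> X" "ind I" "card I = rank ind X"
    using maximal_indep_subset by blast
  have "rank ind (cl E ind X) \<le> card I"
  proof (rule ccontr)
    assume "\<not> ?thesis"
    then obtain J where J: "J \<subseteq> cl E ind X" "ind J" "card I < card J"
      using maximal_indep_subset by (metis not_le)
    then obtain y where y: "y \<in> J - I" "ind (insert y I)"
      using indep_augment[OF I(2)] by blast
    have "card (insert y I) \<le> rank ind (insert y X)"
      using I y by (intro indep_card_le_rank) auto
    moreover have "rank ind (insert y X) = rank ind X"
      using y J unfolding cl_def by auto
    moreover have "card (insert y I) = Suc (card I)"
      using y indep_finite[OF I(2)] by simp
    ultimately show False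
      using I by simp
  qed
  then show ?thesis
    using rank_mono[OF subset_cl[OF assms]] I by simp
qed

lemma cl_idem:
  assumes "X \<subseteq> E"
  shows "cl E ind (cl E ind X) = cl E ind X"
proof
  show "cl E ind (cl E ind X) \<subseteq> cl E ind X"
  proof
    fix x
    assume x: "x \<in> cl E ind (cl E ind X)"
    have "rank ind (insert x X) \<le> rank ind (insert x (cl E ind X))"
      using subset_cl[OF assms] by (intro rank_mono) auto
    also have "\<dots> = rank ind X"
      using x rank_cl[OF assms] unfolding cl_def by simp
    finally have "rank ind (insert x X) = rank ind X"
      using rank_mono[OF subset_insertI] le_antisym by blast
    then show "x \<in> cl E ind X"
      using x unfolding cl_def by auto
  qed
  show "cl E ind X \<subseteq> cl E ind (cl E ind X)"
    using subset_cl[OF cl_subset_ground] .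
qed

lemma cl_subset_flat: "X \<subseteq> Z \<Longrightarrow> flat E ind Z \<Longrightarrow> cl E ind X \<subseteq> Z"
  unfolding flat_def using cl_mono by blast

lemma flat_cl: "X \<subseteq> E \<Longrightarrow> flat E ind (cl E ind X)"
  unfolding flat_def using cl_idem cl_subset_ground by blast

lemma cl_Diff_eq:
  assumes "X \<subseteq> E" "x \<in> cl E ind (X - {x})"
  shows "cl E ind (X - {x}) = cl E ind X"
proof
  show "cl E ind (X - {x}) \<subseteq> cl E ind X"
    by (rule cl_mono) blast
  have "X \<subseteq> cl E ind (X - {x})"
    using assms subset_cl[of "X - {x}"] by blast
  then have "cl E ind X \<subseteq> cl E ind (cl E ind (X - {x}))"
    by (rule cl_mono)
  also have "\<dots> = cl E ind (X - {x})"
    using assms(1) by (intro cl_idem) blast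
  finally show "cl E ind X \<subseteq> cl E ind (X - {x})" .
qed

lemma flat_Diff_pair:
  assumes W: "flat E ind W" and x_cl: "x \<in> cl E ind (W - {x})"
    and x_coloop: "x \<notin> cl E ind (W - {e} - {x})"
  shows "flat E ind (W - {e} - {x})"
proof -
  let ?Y = "W - {e} - {x}"
  have YE: "?Y \<subseteq> E"
    using W unfolding flat_def by blast
  have "e \<notin> cl E ind ?Y"
  proof
    assume "e \<in> cl E ind ?Y"
    then have "W - {x} \<subseteq> cl E ind ?Y"
      using subset_cl[OF YE] by blast
    then have "cl E ind (W - {x}) \<subseteq> cl E ind ?Y"
      using cl_mono cl_idem[OF YE] by blast
    then show False
      using x_cl x_coloop by blast
  qed
  moreover have "cl E ind ?Y \<subseteq> W"
    by (rule cl_subset_flat[OF _ W]) blast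
  ultimately have "cl E ind ?Y \<subseteq> ?Y"
    using x_coloop by blast
  then show ?thesis
    unfolding flat_def using subset_cl[OF YE] YE by (simp add: subset_antisym)
qed

lemma circuit_mem_cl:
  assumes C: "circuit E ind C" and x: "x \<in> C" and "C - {x} \<subseteq> X"
  shows "x \<in> cl E ind X"
proof -
  have CE: "C \<subseteq> E" and dep: "\<not> ind C" and indep: "ind (C - {x})"
    using C x unfolding circuit_def by auto
  have "rank ind C = rank ind (C - {x})"
    using rank_insert_eq_iff[of "C - {x}" "C - {x}" x] indep dep x rank_indep[OF indep]
    by (simp add: insert_absorb)
  then have "x \<in> cl E ind (C - {x})"
    using CE x unfolding cl_def by (auto simp: insert_absorb)
  then show ?thesis
    using cl_mono[OF assms(3)] by blast
qed

lemma dependent_contains_circuit: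
  assumes "D \<subseteq> E" "\<not> ind D"
  shows "\<exists>C\<subseteq>D. circuit E ind C"
proof -
  have "finite D"
    using assms finite_ground finite_subset by blast
  then show ?thesis
    using assms
  proof (induction D rule: finite_psubset_induct)
    case (psubset D)
    show ?case
    proof (cases "\<forall>x\<in>D. ind (D - {x})")
      case True
      then show ?thesis
        using psubset.prems unfolding circuit_def by auto
    next
      case False
      then obtain x where "x \<in> D" "\<not> ind (D - {x})"
        by blast
      then show ?thesis
        using psubset.IH[of "D - {x}"] psubset.prems by blast
    qed
  qed
qed

lemma circuit_of_mem_cl:
  assumes "x \<in> cl E ind X" "x \<notin> X"
  obtains C where "circuit E ind C" "x \<in> C" "C \<subseteq> insert x X"
proof -
  obtain I where I: "I \<subseteq> X" "ind I" "card I = rank ind X"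
    using maximal_indep_subset by blast
  have dep: "\<not> ind (insert x I)"
    using assms rank_insert_eq_iff[OF I, of x] I(1) unfolding cl_def by auto
  moreover have "insert x I \<subseteq> E"
    using assms indep_subset_ground[OF I(2)] unfolding cl_def by auto
  ultimately obtain C where C: "C \<subseteq> insert x I" "circuit E ind C"
    using dependent_contains_circuit by blast
  then have "x \<in> C"
    using I(2) indep_subset unfolding circuit_def by blast
  then show ?thesis
    using that C I(1) by blast
qed

lemma nullity_insert_cl:
  assumes "x \<in> cl E ind X" "x \<notin> X" "finite X"
  shows "nullity ind (insert x X) = nullity ind X + 1"
  using assms unfolding nullity_def cl_def by simp

lemma nullity_insert_not_cl:
  assumes "x \<in> E" "x \<notin> cl E ind X" "x \<notin> X" "finite X"
  shows "nullity ind (insert x X) = nullity ind X"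
  using assms rank_insert_not_cl unfolding nullity_def by simp

lemma basis_card:
  assumes "basis ind B"
  shows "card B = rank ind E"
proof -
  have B: "ind B" "\<And>X. ind X \<Longrightarrow> B \<subseteq> X \<Longrightarrow> X = B"
    using assms unfolding basis_def by auto
  obtain J where "B \<subseteq> J" "J \<subseteq> E" "ind J" "card J = rank ind E"
    using indep_extend[OF B(1) indep_subset_ground[OF B(1)]] .
  then show ?thesis
    using B(2)[of J] by simp
qed

lemma basis_if_card:
  assumes "ind B" "card B = rank ind E"
  shows "basis ind B"
proof -
  have "X = B" if "ind X" "B \<subseteq> X" for X
  proof -
    have "card X \<le> card B"
      using that assms indep_card_le_rank[OF indep_subset_ground] by simp
    then show ?thesis
      using that indep_finite card_seteq by blast
  qed
  then show ?thesis
    using assms unfolding basis_def by blast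
qed

lemma dual_indep_subset_ground: "dual_indep E ind X \<Longrightarrow> X \<subseteq> E"
  unfolding dual_indep_def by blast

lemma dual_indep_empty: "dual_indep E ind {}"
proof -
  obtain B where "B \<subseteq> E" "ind B" "card B = rank ind E"
    using maximal_indep_subset .
  then show ?thesis
    unfolding dual_indep_def using basis_if_card by blast
qed

lemma rank_dual_le:
  assumes Y: "Y \<subseteq> E"
  shows "rank (dual_indep E ind) Y + rank ind E \<le> card Y + rank ind (E - Y)"
proof -
  obtain D where D: "D \<subseteq> Y" "dual_indep E ind D" "card D = rank (dual_indep E ind) Y"
    using rank_attained[where P = "dual_indep E ind", OF finite_ground dual_indep_subset_ground
        dual_indep_empty] .
  then obtain B where B: "basis ind B" "D \<inter> B = {}"
    unfolding dual_indep_def by blast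
  have indB: "ind B"
    using B unfolding basis_def by blast
  have finY: "finite Y"
    using Y finite_ground finite_subset by blast
  have "card D \<le> card (Y - B)"
    using D B finY by (intro card_mono) auto
  moreover have "card (B - Y) \<le> rank ind (E - Y)"
    using indB indep_subset_ground[OF indB] indep_subset[OF indB]
    by (intro indep_card_le_rank) auto
  ultimately show ?thesis
    using card_Diff_Int_split[OF finY indep_finite[OF indB]] basis_card[OF B(1)] D(3) by linarith
qed

lemma rank_dual_ge:
  assumes Y: "Y \<subseteq> E"
  shows "card Y + rank ind (E - Y) \<le> rank (dual_indep E ind) Y + rank ind E"
proof -
  obtain J where J: "J \<subseteq> E - Y" "ind J" "card J = rank ind (E - Y)"
    using maximal_indep_subset .
  then obtain B where B: "J \<subseteq> B" "B \<subseteq> E" "ind B" "card B = rank ind E"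
    using indep_extend[OF J(2), of E] by blast
  have finY: "finite Y"
    using Y finite_ground finite_subset by blast
  have "card J \<le> card (B - Y)"
    using J B indep_finite[OF B(3)] by (intro card_mono) auto
  moreover have "dual_indep E ind (Y - B)"
    unfolding dual_indep_def using basis_if_card[OF B(3,4)] Y by blast
  then have "card (Y - B) \<le> rank (dual_indep E ind) Y"
    by (intro card_le_rank[where P = "dual_indep E ind", OF finite_ground dual_indep_subset_ground])
      auto
  ultimately show ?thesis
    using card_Diff_Int_split[OF finY indep_finite[OF B(3)]] J(3) B(4) by linarith
qed

lemma rank_dual:
  assumes "Y \<subseteq> E"
  shows "rank (dual_indep E ind) Y + rank ind E = card Y + rank ind (E - Y)"
  using rank_dual_le[OF assms] rank_dual_ge[OF assms] by linarith

end

lemma rank_del: "rank (del_indep ind e) X = rank ind (X - {e})"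
proof -
  have "{card I | I. I \<subseteq> X \<and> del_indep ind e I} = {card I | I. I \<subseteq> X - {e} \<and> ind I}"
    unfolding del_indep_def by blast
  then show ?thesis
    unfolding rank_def by simp
qed

lemma nullity_del: "e \<notin> X \<Longrightarrow> nullity (del_indep ind e) X = nullity ind X"
  unfolding nullity_def rank_del by simp

lemma cl_del:
  assumes "X \<subseteq> E - {e}"
  shows "cl (E - {e}) (del_indep ind e) X = cl E ind X - {e}"
proof -
  have X: "X - {e} = X"
    using assms by blast
  have "rank (del_indep ind e) (insert x X) = rank ind (insert x X)" if "x \<noteq> e" for x
    using that X by (simp add: rank_del insert_Diff_if)
  then show ?thesis
    unfolding cl_def rank_del[of ind e X] X by auto
qed

lemma circuit_del_iff: "circuit (E - {e}) (del_indep ind e) C \<longleftrightarrow> circuit E ind C \<and> e \<notin> C"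
  unfolding circuit_def del_indep_def by blast

lemma cyclic_flat_del_iff:
  "cyclic_flat (E - {e}) (del_indep ind e) F \<longleftrightarrow>
     F \<subseteq> E - {e} \<and> cl E ind F - {e} = F \<and> F = \<Union>{C. circuit E ind C \<and> C \<subseteq> F}"
proof (cases "F \<subseteq> E - {e}")
  case True
  then have "{C. circuit (E - {e}) (del_indep ind e) C \<and> C \<subseteq> F} = {C. circuit E ind C \<and> C \<subseteq> F}"
    by (auto simp: circuit_del_iff)
  then show ?thesis
    unfolding cyclic_flat_def flat_def using cl_del[OF True] True by simp
next
  case False
  then show ?thesis
    unfolding cyclic_flat_def flat_def by simp
qed

context finite_matroid
begin

lemma subset_cl_del:
  assumes "X \<subseteq> E - {e}"
  shows "X \<subseteq> cl (E - {e}) (del_indep ind e) X"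
proof -
  have "X \<subseteq> cl E ind X"
    using assms by (intro subset_cl) blast
  then show ?thesis
    unfolding cl_del[OF assms] using assms by blast
qed

lemma cl_del_subset_cyclic_flat:
  assumes "X \<subseteq> F" "cyclic_flat (E - {e}) (del_indep ind e) F"
  shows "cl (E - {e}) (del_indep ind e) X \<subseteq> F"
proof -
  have "F \<subseteq> E - {e}" "cl E ind F - {e} = F"
    using assms(2) unfolding cyclic_flat_del_iff by blast+
  moreover have "X \<subseteq> E - {e}"
    using assms(1) calculation(1) by blast
  ultimately show ?thesis
    unfolding cl_del[OF \<open>X \<subseteq> E - {e}\<close>] using cl_mono[OF assms(1)] by blast
qed

end

section \<open>Matchings and the rank of a transversal matroid\<close>

definition matching :: "(nat \<Rightarrow> 'a set) \<Rightarrow> nat \<Rightarrow> 'a set \<Rightarrow> ('a \<Rightarrow> nat) \<Rightarrow> bool" where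
  "matching A r I f \<longleftrightarrow> inj_on f I \<and> (\<forall>x\<in>I. f x \<in> {1..r} \<and> x \<in> A (f x))"

lemma partial_transversal_iff_matching:
  "partial_transversal E A r X \<longleftrightarrow> X \<subseteq> E \<and> (\<exists>f. matching A r X f)"
  unfolding partial_transversal_def matching_def by auto

lemma matching_subset: "matching A r I f \<Longrightarrow> J \<subseteq> I \<Longrightarrow> matching A r J f"
  unfolding matching_def by (auto intro: inj_on_subset)

lemma partial_transversal_subset_ground: "partial_transversal E A r X \<Longrightarrow> X \<subseteq> E"
  unfolding partial_transversal_def by blast

lemma partial_transversal_empty: "partial_transversal E A r {}"
  unfolding partial_transversal_def by simp

lemma maximum_matching:
  assumes "finite E"
  obtains I f where "I \<subseteq> X" "I \<subseteq> E" "matching A r I f"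
    "card I = rank (partial_transversal E A r) X"
proof -
  obtain I where "I \<subseteq> X" "partial_transversal E A r I" "card I = rank (partial_transversal E A r) X"
    using rank_attained[where P = "partial_transversal E A r", OF assms
        partial_transversal_subset_ground partial_transversal_empty] .
  then show ?thesis
    using that unfolding partial_transversal_iff_matching by blast
qed

lemma matching_card_le_rank:
  assumes "finite E" "I \<subseteq> X" "I \<subseteq> E" "matching A r I f"
  shows "card I \<le> rank (partial_transversal E A r) X"
  using assms
  by (intro card_le_rank[where P = "partial_transversal E A r", OF assms(1)
        partial_transversal_subset_ground]) (auto simp: partial_transversal_iff_matching)

lemma rank_partial_transversal_le:
  assumes "finite E"
  shows "rank (partial_transversal E A r) Y \<le> card {i \<in> {1..r}. A i \<inter> Y \<noteq> {}}"
proof -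
  obtain I f where I: "I \<subseteq> Y" "matching A r I f" "card I = rank (partial_transversal E A r) Y"
    using maximum_matching[OF assms] .
  then have "f ` I \<subseteq> {i \<in> {1..r}. A i \<inter> Y \<noteq> {}}"
    unfolding matching_def by auto
  then have "card (f ` I) \<le> card {i \<in> {1..r}. A i \<inter> Y \<noteq> {}}"
    by (intro card_mono) auto
  moreover have "card (f ` I) = card I"
    using I(2) card_image unfolding matching_def by blast
  ultimately show ?thesis
    using I(3) by simp
qed

fun alt_path :: "(nat \<Rightarrow> 'a set) \<Rightarrow> ('a \<Rightarrow> nat) \<Rightarrow> nat \<Rightarrow> 'a list \<Rightarrow> bool" where
  "alt_path A f s [] \<longleftrightarrow> True"
| "alt_path A f s (x # xs) \<longleftrightarrow> x \<in> A s \<and> alt_path A f (f x) xs"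

fun alt_end :: "('a \<Rightarrow> nat) \<Rightarrow> nat \<Rightarrow> 'a list \<Rightarrow> nat" where
  "alt_end f s [] = s"
| "alt_end f s (x # xs) = alt_end f (f x) xs"

lemma alt_path_append: "alt_path A f s (xs @ ys) \<longleftrightarrow> alt_path A f s xs \<and> alt_path A f (alt_end f s xs) ys"
  by (induction xs arbitrary: s) auto

lemma alt_end_append: "alt_end f s (xs @ ys) = alt_end f (alt_end f s xs) ys"
  by (induction xs arbitrary: s) auto

lemma alt_end_mem: "set xs \<subseteq> I \<Longrightarrow> alt_end f s xs \<in> insert s (f ` I)"
  by (induction xs arbitrary: s) auto

lemma alt_path_cong: "\<forall>z\<in>set xs. g z = f z \<Longrightarrow> alt_path A g s xs = alt_path A f s xs"
  by (induction xs arbitrary: s) simp_all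

lemma alt_end_cong: "\<forall>z\<in>set xs. g z = f z \<Longrightarrow> alt_end g s xs = alt_end f s xs"
  by (induction xs arbitrary: s) simp_all

lemma alt_path_augment:
  assumes "matching A r I f" "s \<in> {1..r}" "s \<notin> f ` I"
    and "alt_path A f s xs" "distinct xs" "set xs \<subseteq> I"
  shows "\<exists>g. matching A r I g \<and> alt_end f s xs \<notin> g ` I"
  using assms
proof (induction xs arbitrary: f s)
  case Nil
  then show ?case
    by auto
next
  case (Cons x xs)
  define g where "g = f(x := s)"
  have x: "x \<in> I" "x \<in> A s"
    using Cons.prems by auto
  have f: "inj_on f I" "\<forall>z\<in>I. f z \<in> {1..r} \<and> z \<in> A (f z)"
    using Cons.prems(1) unfolding matching_def by auto
  have "matching A r I g"
    using f Cons.prems(2,3) x inj_on_fun_updI[OF f(1) Cons.prems(3)]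
    unfolding matching_def g_def by auto
  moreover have "f x \<in> {1..r}"
    using f x by blast
  moreover have "f x \<notin> g ` I"
    using f(1) x(1) Cons.prems(3) unfolding g_def inj_on_def by (auto split: if_splits)
  moreover have agree: "\<forall>z\<in>set xs. g z = f z"
    using Cons.prems(5) unfolding g_def by auto
  ultimately obtain h where "matching A r I h" "alt_end g (f x) xs \<notin> h ` I"
    using Cons.IH[of g "f x"] Cons.prems(4-6) alt_path_cong[OF agree] by auto
  then show ?case
    using alt_end_cong[OF agree] by auto
qed

lemma matching_combine:
  assumes "matching A r R f" "matching A r J g" "f ` R \<subseteq> S" "\<forall>z\<in>J - R. g z \<notin> S"
  shows "matching A r (R \<union> J) (\<lambda>z. if z \<in> R then f z else g z)"
  using assms unfolding matching_def inj_on_def by (smt (verit) DiffI UnE image_subset_iff)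

definition alt_reach :: "(nat \<Rightarrow> 'a set) \<Rightarrow> ('a \<Rightarrow> nat) \<Rightarrow> 'a set \<Rightarrow> nat \<Rightarrow> nat set" where
  "alt_reach A f I s = {alt_end f s xs | xs. alt_path A f s xs \<and> distinct xs \<and> set xs \<subseteq> I}"

lemma start_mem_alt_reach: "s \<in> alt_reach A f I s"
  unfolding alt_reach_def by (intro CollectI exI[of _ "[]"]) simp

lemma alt_reach_step:
  "f ` {x \<in> I. \<exists>t\<in>alt_reach A f I s. x \<in> A t} \<subseteq> alt_reach A f I s"
proof
  fix u
  assume "u \<in> f ` {x \<in> I. \<exists>t\<in>alt_reach A f I s. x \<in> A t}"
  then obtain x xs where x: "u = f x" "x \<in> I" "x \<in> A (alt_end f s xs)"
    and xs: "alt_path A f s xs" "distinct xs" "set xs \<subseteq> I"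
    unfolding alt_reach_def by blast
  show "u \<in> alt_reach A f I s"
  proof (cases "x \<in> set xs")
    case True
    then obtain ys zs where "xs = ys @ x # zs"
      by (meson split_list)
    then show ?thesis
      using x xs unfolding alt_reach_def
      by (intro CollectI exI[of _ "ys @ [x]"]) (auto simp: alt_path_append alt_end_append)
  next
    case False
    then show ?thesis
      using x xs unfolding alt_reach_def
      by (intro CollectI exI[of _ "xs @ [x]"]) (auto simp: alt_path_append alt_end_append)
  qed
qed

lemma alt_reach_matched:
  assumes "finite E" "I \<subseteq> X" "X \<subseteq> E" "matching A r I f"
    and maximum: "card I = rank (partial_transversal E A r) X"
    and "s \<in> {1..r}" "s \<notin> f ` I"
  shows "{x \<in> X. \<exists>t\<in>alt_reach A f I s. x \<in> A t} \<subseteq> I"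
proof
  fix x
  assume "x \<in> {x \<in> X. \<exists>t\<in>alt_reach A f I s. x \<in> A t}"
  then obtain xs where x: "x \<in> X" "x \<in> A (alt_end f s xs)"
    and xs: "alt_path A f s xs" "distinct xs" "set xs \<subseteq> I"
    unfolding alt_reach_def by blast
  show "x \<in> I"
  proof (rule ccontr)
    assume "x \<notin> I"
    obtain g where g: "matching A r I g" "alt_end f s xs \<notin> g ` I"
      using alt_path_augment[OF assms(4,6,7) xs] by blast
    have "alt_end f s xs \<in> {1..r}"
      using alt_end_mem[OF xs(3), of f s] assms(4,6) unfolding matching_def by auto
    then have "matching A r (insert x I) (g(x := alt_end f s xs))"
      using g x \<open>x \<notin> I\<close> unfolding matching_def by (auto simp: inj_on_fun_updI)
    then have "card (insert x I) \<le> card I"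
      using matching_card_le_rank[OF assms(1)] assms(2,3) x maximum by (metis insert_subset subset_trans)
    then show False
      using \<open>x \<notin> I\<close> finite_subset[OF _ assms(1)] assms(2,3) by fastforce
  qed
qed

text \<open>If an index \<open>s\<close> were left unmatched, the elements \<open>R\<close> reachable from it by
  alternating paths are all matched, into the reachable indices; rematching \<open>R\<close> this way on top of a
  maximum matching of \<open>X - y\<close>, for some \<open>y \<in> A s \<inter> X\<close>, gives a larger matching of \<open>X\<close>.\<close>

lemma maximum_matching_covers:
  assumes fin: "finite E" and XE: "X \<subseteq> E"
    and no_coloop: "\<forall>y\<in>X. rank (partial_transversal E A r) (X - {y}) = rank (partial_transversal E A r) X"
    and I: "I \<subseteq> X" "matching A r I f" "card I = rank (partial_transversal E A r) X"
    and s: "s \<in> {1..r}" "A s \<inter> X \<noteq> {}"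
  shows "s \<in> f ` I"
proof (rule ccontr)
  assume unmatched: "s \<notin> f ` I"
  define S where "S = alt_reach A f I s"
  define R where "R = {x \<in> X. \<exists>t\<in>S. x \<in> A t}"
  have RI: "R \<subseteq> I"
    unfolding R_def S_def by (rule alt_reach_matched[OF fin I(1) XE I(2,3) s(1) unmatched])
  then have "R \<subseteq> {x \<in> I. \<exists>t\<in>S. x \<in> A t}"
    unfolding R_def by blast
  then have fR: "f ` R \<subseteq> S"
    using alt_reach_step[of f I A s] unfolding S_def by blast
  obtain y where "y \<in> A s" "y \<in> X"
    using s by blast
  then have y: "y \<in> R"
    using start_mem_alt_reach unfolding R_def S_def by blast
  obtain J g where J: "J \<subseteq> X - {y}" "matching A r J g"
    "card J = rank (partial_transversal E A r) (X - {y})"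
    using maximum_matching[OF fin] by metis
  have "\<forall>z\<in>J - R. g z \<notin> S"
    using J unfolding R_def matching_def by blast
  then have "matching A r (R \<union> J) (\<lambda>z. if z \<in> R then f z else g z)"
    using matching_combine[OF matching_subset[OF I(2) RI] J(2) fR] by blast
  moreover have RJ: "R \<union> J \<subseteq> X"
    using RI I(1) J(1) by blast
  ultimately have "card (R \<union> J) \<le> card I"
    using matching_card_le_rank[OF fin] I(3) XE by (metis subset_trans)
  moreover have "card J < card (R \<union> J)"
    using y J(1) RJ XE finite_subset[OF _ fin] by (intro psubset_card_mono) auto
  ultimately show False
    using J(3) I(3) no_coloop y unfolding R_def by auto
qed

lemma card_meeting_le_rank_partial_transversal:
  assumes fin: "finite E" and XE: "X \<subseteq> E"
    and no_coloop: "\<forall>y\<in>X. rank (partial_transversal E A r) (X - {y}) = rank (partial_transversal E A r) X"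
  shows "card {i \<in> {1..r}. A i \<inter> X \<noteq> {}} \<le> rank (partial_transversal E A r) X"
proof -
  obtain I f where I: "I \<subseteq> X" "matching A r I f" "card I = rank (partial_transversal E A r) X"
    using maximum_matching[OF fin] by metis
  then have "{i \<in> {1..r}. A i \<inter> X \<noteq> {}} \<subseteq> f ` I"
    using maximum_matching_covers[OF fin XE no_coloop] by blast
  moreover have "finite I"
    using I(1) XE finite_subset[OF _ fin] by blast
  ultimately have "card {i \<in> {1..r}. A i \<inter> X \<noteq> {}} \<le> card (f ` I)"
    by (intro card_mono) auto
  also have "\<dots> \<le> card I"
    using card_image_le \<open>finite I\<close> by blast
  finally show ?thesis
    using I(3) by simp
qed

section \<open>Graphs and forests\<close>

lemma simple_graph_on_induced:
  assumes "simple_graph_on V Ed"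
  shows "simple_graph_on U (induced Ed U)"
  unfolding simple_graph_on_def
proof
  fix ed
  assume "ed \<in> induced Ed U"
  then have ed: "ed \<in> Ed" "ed \<subseteq> U"
    unfolding induced_def by auto
  then obtain i j where "i \<noteq> j" "ed = {i, j}"
    using assms unfolding simple_graph_on_def by meson
  then show "\<exists>i j. i \<in> U \<and> j \<in> U \<and> i \<noteq> j \<and> ed = {i, j}"
    using ed(2) by blast
qed

lemma induced_empty_if_card_le_1:
  assumes "simple_graph_on V Ed" "finite U" "card U \<le> 1"
  shows "induced Ed U = {}"
proof -
  have no_pair: "\<not> {i, j} \<subseteq> U" if "i \<noteq> j" for i j
    using that card_mono[OF assms(2), of "{i, j}"] assms(3) by auto
  show ?thesis
  proof (rule equals0I)
    fix ed
    assume "ed \<in> induced Ed U"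
    then obtain i j where "{i, j} \<subseteq> U" "i \<noteq> j"
      using simple_graph_on_induced[OF assms(1)] unfolding simple_graph_on_def by blast
    then show False
      using no_pair by blast
  qed
qed

definition edge_rel :: "nat set set \<Rightarrow> (nat \<times> nat) set" where
  "edge_rel D = {(x, y). {x, y} \<in> D}"

lemma connected_graph_iff: "connected_graph V D \<longleftrightarrow> (\<forall>u\<in>V. \<forall>v\<in>V. (u, v) \<in> (edge_rel D)\<^sup>*)"
  unfolding connected_graph_def edge_rel_def ..

lemma sym_edge_rel: "sym (edge_rel D)"
  unfolding edge_rel_def sym_def by (simp add: insert_commute)

lemma edge_rel_insert: "edge_rel (insert {a, b} D) = insert (a, b) (insert (b, a) (edge_rel D))"
  unfolding edge_rel_def by (auto simp: doubleton_eq_iff)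

definition walk :: "nat set set \<Rightarrow> nat list \<Rightarrow> bool" where
  "walk D xs \<longleftrightarrow> (\<forall>k. Suc k < length xs \<longrightarrow> {xs ! k, xs ! Suc k} \<in> D)"

lemma walk_prefix:
  assumes "walk D (ys @ zs)"
  shows "walk D ys"
  unfolding walk_def
proof (intro allI impI)
  fix k
  assume k: "Suc k < length ys"
  then have "{(ys @ zs) ! k, (ys @ zs) ! Suc k} \<in> D"
    using assms unfolding walk_def by simp
  then show "{ys ! k, ys ! Suc k} \<in> D"
    using k by (simp add: nth_append)
qed

lemma walk_snoc:
  assumes walk: "walk D xs" and last: "xs \<noteq> [] \<Longrightarrow> {last xs, z} \<in> D"
  shows "walk D (xs @ [z])"
  unfolding walk_def
proof (intro allI impI)
  fix k
  assume k: "Suc k < length (xs @ [z])"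
  show "{(xs @ [z]) ! k, (xs @ [z]) ! Suc k} \<in> D"
  proof (cases "Suc k < length xs")
    case True
    then show ?thesis
      using walk unfolding walk_def by (simp add: nth_append)
  next
    case False
    then have "xs \<noteq> []" "k = length xs - 1"
      using k by auto
    then show ?thesis
      using last by (simp add: nth_append last_conv_nth)
  qed
qed

lemma simple_walk_of_rtrancl:
  assumes "(a, b) \<in> (edge_rel D)\<^sup>*"
  obtains xs where "xs \<noteq> []" "distinct xs" "hd xs = a" "last xs = b" "walk D xs"
proof -
  have "\<exists>xs. xs \<noteq> [] \<and> distinct xs \<and> hd xs = a \<and> last xs = b \<and> walk D xs"
    using assms
  proof (induction rule: rtrancl_induct)
    case base
    then show ?case
      by (intro exI[of _ "[a]"]) (simp add: walk_def)
  next
    case (step y z)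
    then obtain xs where xs: "xs \<noteq> []" "distinct xs" "hd xs = a" "last xs = y" "walk D xs"
      by blast
    show ?case
    proof (cases "z \<in> set xs")
      case True
      then obtain ys zs where "xs = ys @ z # zs"
        by (meson split_list)
      then show ?thesis
        using xs walk_prefix[of D "ys @ [z]" zs]
        by (intro exI[of _ "ys @ [z]"]) (auto simp: hd_append split: if_splits)
    next
      case False
      then show ?thesis
        using xs step.hyps(2) walk_snoc[of D xs z]
        by (intro exI[of _ "xs @ [z]"]) (auto simp: edge_rel_def)
    qed
  qed
  then show ?thesis
    using that by blast
qed

lemma acyclic_graph_subset: "acyclic_graph D' \<Longrightarrow> D \<subseteq> D' \<Longrightarrow> acyclic_graph D"
  unfolding acyclic_graph_def by blast

lemma acyclic_graph_insert_not_connected: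
  assumes acyclic: "acyclic_graph (insert {a, b} D)" and new: "{a, b} \<notin> D" and "a \<noteq> b"
  shows "(a, b) \<notin> (edge_rel D)\<^sup>*"
proof
  assume "(a, b) \<in> (edge_rel D)\<^sup>*"
  then obtain xs where xs: "xs \<noteq> []" "distinct xs" "hd xs = a" "last xs = b" "walk D xs"
    by (rule simple_walk_of_rtrancl)
  have "length xs \<noteq> 1"
    using xs \<open>a \<noteq> b\<close> by (auto simp: length_Suc_conv)
  moreover have "length xs \<noteq> 2"
    using xs new by (auto simp: length_Suc_conv numeral_2_eq_2 walk_def)
  moreover have "length xs \<noteq> 0"
    using xs(1) by simp
  ultimately have "length xs \<ge> 3"
    by presburger
  moreover have "{last xs, hd xs} \<in> insert {a, b} D"
    using xs by (simp add: insert_commute)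
  ultimately show False
    using acyclic xs(2,5) unfolding acyclic_graph_def walk_def by blast
qed

definition component :: "nat set set \<Rightarrow> nat \<Rightarrow> nat set" where
  "component D v = (edge_rel D)\<^sup>* `` {v}"

lemma mem_component_self: "v \<in> component D v"
  unfolding component_def by simp

lemma mem_component_iff: "u \<in> component D v \<longleftrightarrow> (v, u) \<in> (edge_rel D)\<^sup>*"
  unfolding component_def by simp

lemma component_eq:
  assumes "u \<in> component D v"
  shows "component D u = component D v"
proof -
  have "(v, u) \<in> (edge_rel D)\<^sup>*" "(u, v) \<in> (edge_rel D)\<^sup>*"
    using assms sym_rtrancl[OF sym_edge_rel] unfolding component_def by (auto dest: symD)
  then show ?thesis
    unfolding component_def by (meson Image_singleton_iff rtrancl_trans subset_antisym subsetI)
qed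

lemma component_insert_edge_subset:
  fixes D :: "nat set set" and a b v :: nat
  defines "K \<equiv> component D a \<union> component D b"
  shows "component (insert {a, b} D) v \<subseteq> (if v \<in> K then K else component D v)"
proof
  fix w
  assume "w \<in> component (insert {a, b} D) v"
  then have "(v, w) \<in> (edge_rel (insert {a, b} D))\<^sup>*"
    by (simp add: mem_component_iff)
  then show "w \<in> (if v \<in> K then K else component D v)"
  proof (induction rule: rtrancl_induct)
    case base
    then show ?case
      using mem_component_self by simp
  next
    case (step w w')
    show ?case
    proof (cases "(w, w') \<in> edge_rel D")
      case True
      have "w' \<in> component D u" if "w \<in> component D u" for u
        using that True unfolding component_def by (auto intro: rtrancl_into_rtrancl)
      then show ?thesis
        using step.IH unfolding K_def by (auto split: if_splits)
    next
      case False
      then have "w \<in> {a, b}" "w' \<in> {a, b}"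
        using step.hyps(2) edge_rel_insert by auto
      moreover have "v \<in> K" if "w \<in> component D v" "w \<in> {a, b}"
        using that component_eq mem_component_self unfolding K_def by blast
      ultimately show ?thesis
        using step.IH mem_component_self unfolding K_def by (auto split: if_splits)
    qed
  qed
qed

lemma component_insert_edge:
  fixes D :: "nat set set" and a b v :: nat
  defines "K \<equiv> component D a \<union> component D b"
  shows "component (insert {a, b} D) v = (if v \<in> K then K else component D v)"
proof -
  let ?R = "edge_rel D" and ?R' = "edge_rel (insert {a, b} D)"
  have mono: "?R\<^sup>* \<subseteq> ?R'\<^sup>*"
    using edge_rel_insert by (intro rtrancl_mono) blast
  have K_sub: "K \<subseteq> component (insert {a, b} D) v" if "v \<in> K"
  proof
    fix w
    assume "w \<in> K"
    have ab: "(a, b) \<in> ?R'\<^sup>*" "(b, a) \<in> ?R'\<^sup>*"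
      using edge_rel_insert by auto
    have "(v, a) \<in> ?R\<^sup>* \<or> (v, b) \<in> ?R\<^sup>*"
      using that component_eq mem_component_self mem_component_iff unfolding K_def by blast
    then have "(v, a) \<in> ?R'\<^sup>*"
      using mono ab by (meson rtrancl_trans subsetD)
    moreover have "(a, w) \<in> ?R'\<^sup>* \<or> (b, w) \<in> ?R'\<^sup>*"
      using \<open>w \<in> K\<close> mono unfolding K_def component_def by blast
    ultimately show "w \<in> component (insert {a, b} D) v"
      using ab unfolding component_def by (meson Image_singleton_iff rtrancl_trans)
  qed
  have sub: "component (insert {a, b} D) v \<subseteq> (if v \<in> K then K else component D v)"
    unfolding K_def by (rule component_insert_edge_subset)
  show ?thesis
  proof (cases "v \<in> K")
    case True
    then show ?thesis
      using sub K_sub by (intro equalityI) simp_all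
  next
    case False
    have "component D v \<subseteq> component (insert {a, b} D) v"
      using mono unfolding component_def by blast
    then show ?thesis
      using sub False by (intro equalityI) simp_all
  qed
qed

lemma card_components_insert_edge:
  assumes "finite V" "a \<in> V" "b \<in> V" and apart: "component D a \<noteq> component D b"
  shows "Suc (card (component (insert {a, b} D) ` V)) = card (component D ` V)"
proof -
  define K where "K = component D a \<union> component D b"
  let ?C = "component D ` (V - K)"
  have V: "V = (V \<inter> K) \<union> (V - K)"
    by blast
  have "component D ` (V \<inter> K) = {component D a, component D b}"
  proof (intro equalityI subsetI)
    fix C
    assume "C \<in> component D ` (V \<inter> K)"
    then show "C \<in> {component D a, component D b}"
      using component_eq unfolding K_def by blast
  next
    fix C
    assume "C \<in> {component D a, component D b}"
    then show "C \<in> component D ` (V \<inter> K)"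
      using assms(2,3) mem_component_self unfolding K_def by blast
  qed
  then have old: "component D ` V = insert (component D a) (insert (component D b) ?C)"
    using V by (metis image_Un insert_is_Un sup_assoc)
  have "component (insert {a, b} D) ` (V \<inter> K) = {K}"
    using assms(2) mem_component_self component_insert_edge[of a b D] unfolding K_def by auto
  moreover have "component (insert {a, b} D) ` (V - K) = ?C"
    using component_insert_edge[of a b D] unfolding K_def by auto
  ultimately have new: "component (insert {a, b} D) ` V = insert K ?C"
    using V by (metis image_Un insert_is_Un)
  have "component D v \<noteq> component D a" "component D v \<noteq> component D b" "K \<noteq> component D v"
    if "v \<notin> K" for v
    using that mem_component_self component_eq unfolding K_def by blast+
  then have "component D a \<notin> ?C" "component D b \<notin> ?C" "K \<notin> ?C"
    by auto
  then show ?thesis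
    unfolding old new using assms(1) apart by simp
qed

lemma card_components_forest:
  assumes "finite V" "simple_graph_on V D" "acyclic_graph D"
  shows "card (component D ` V) + card D = card V"
proof -
  have "D \<subseteq> Pow V"
  proof
    fix ed
    assume "ed \<in> D"
    then obtain a b where "a \<in> V" "b \<in> V" "ed = {a, b}"
      using assms(2) unfolding simple_graph_on_def by blast
    then show "ed \<in> Pow V"
      by simp
  qed
  then have "finite D"
    using assms(1) finite_subset by blast
  then show ?thesis
    using assms(2,3)
  proof (induction D rule: finite_induct)
    case empty
    have "component {} ` V = (\<lambda>v. {v}) ` V"
      unfolding component_def edge_rel_def by simp
    then show ?case
      by (simp add: card_image)
  next
    case (insert ed D)
    obtain a b where ab: "a \<in> V" "b \<in> V" "a \<noteq> b" "ed = {a, b}"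
      using insert.prems(1) unfolding simple_graph_on_def by blast
    have "simple_graph_on V D" "acyclic_graph D"
      using insert.prems acyclic_graph_subset unfolding simple_graph_on_def by blast+
    then have IH: "card (component D ` V) + card D = card V"
      by (rule insert.IH)
    have "component D a \<noteq> component D b"
      using acyclic_graph_insert_not_connected insert.prems(2) insert.hyps(2) ab
        mem_component_self mem_component_iff by metis
    then have "Suc (card (component (insert ed D) ` V)) = card (component D ` V)"
      unfolding ab(4) by (rule card_components_insert_edge[OF assms(1) ab(1,2)])
    then show ?case
      using IH insert.hyps by simp
  qed
qed

lemma card_edges_tree:
  assumes "finite V" "V \<noteq> {}" "simple_graph_on V D" "acyclic_graph D" "connected_graph V D"
  shows "Suc (card D) = card V"
proof -
  obtain v where v: "v \<in> V"
    using assms(2) by blast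
  then have "component D ` V = {component D v}"
    using assms(5) component_eq mem_component_iff unfolding connected_graph_iff by blast
  then show ?thesis
    using card_components_forest[OF assms(1,3,4)] by simp
qed

section \<open>Matroids whose dual is transversal\<close>

lemma Ae_iff: "i \<in> Ae A r e X \<longleftrightarrow> i \<in> {1..r} \<and> e \<in> A i \<and> A i \<subseteq> X"
  unfolding Ae_def Aset_def by blast

lemma Ae_mono: "X \<subseteq> Y \<Longrightarrow> Ae A r e X \<subseteq> Ae A r e Y"
  unfolding Ae_def Aset_def by blast

lemma presenting_edgeE:
  assumes "presenting E ind A r e Ed" "ed \<in> Ed"
  obtains i j where "i \<in> Ae A r e E" "j \<in> Ae A r e E" "i \<noteq> j" "ed = {i, j}"
proof -
  have "simple_graph_on (Ae A r e E) Ed"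
    using assms(1) unfolding presenting_def by (rule conjunct1)
  then show ?thesis
    using assms(2) that unfolding simple_graph_on_def by meson
qed

lemma finite_Aset: "finite (Aset A r X)"
  unfolding Aset_def by simp

lemma finite_Ae: "finite (Ae A r e X)"
  unfolding Ae_def Aset_def by simp

lemma card_Aset_insert:
  assumes "e \<notin> F"
  shows "card (Aset A r (insert e F)) = card (Aset A r F) + card (Ae A r e (insert e F))"
proof -
  have "Aset A r (insert e F) = Aset A r F \<union> Ae A r e (insert e F)"
    "Aset A r F \<inter> Ae A r e (insert e F) = {}"
    using assms unfolding Ae_def Aset_def by auto
  then show ?thesis
    by (simp add: card_Un_disjoint[OF finite_Aset finite_Ae])
qed

locale cotransversal = finite_matroid +
  fixes A :: "nat \<Rightarrow> 'a set" and r :: nat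
  assumes dual_transversal: "\<forall>X. dual_indep E ind X \<longleftrightarrow> partial_transversal E A r X"
    and r_def: "r = rank (dual_indep E ind) E"
    and presentation_subset: "i \<in> {1..r} \<Longrightarrow> A i \<subseteq> E"
begin

lemma dual_indep_eq: "dual_indep E ind = partial_transversal E A r"
  using dual_transversal by blast

lemma rank_partial_transversal:
  assumes "Y \<subseteq> E"
  shows "rank (partial_transversal E A r) Y + rank ind E = card Y + rank ind (E - Y)"
  using rank_dual[OF assms] unfolding dual_indep_eq .

lemma r_add_rank: "r + rank ind E = card E"
  using rank_partial_transversal[of E] rank_indep[OF indep_empty] r_def unfolding dual_indep_eq
  by simp

lemma sets_meeting_compl:
  assumes "X \<subseteq> E"
  shows "{i \<in> {1..r}. A i \<inter> (E - X) \<noteq> {}} = {1..r} - Aset A r X"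
  using assms presentation_subset unfolding Aset_def by blast

lemma card_Aset_add_meeting:
  assumes "X \<subseteq> E"
  shows "card (Aset A r X) + card {i \<in> {1..r}. A i \<inter> (E - X) \<noteq> {}} = r"
proof -
  have sub: "Aset A r X \<subseteq> {1..r}"
    unfolding Aset_def by blast
  then have "card (Aset A r X) \<le> r"
    using card_mono[OF finite_atLeastAtMost sub] by simp
  then show ?thesis
    unfolding sets_meeting_compl[OF assms] using sub by (simp add: card_Diff_subset finite_subset)
qed

lemma rank_partial_transversal_compl:
  assumes "X \<subseteq> E"
  shows "int (rank (partial_transversal E A r) (E - X)) = int r - nullity ind X"
proof -
  have "card (E - X) + card X = card E"
    using assms finite_ground by (metis card_Diff_subset finite_subset le_add_diff_inverse2 card_mono)
  moreover have "E - (E - X) = X"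
    using assms by blast
  ultimately show ?thesis
    using rank_partial_transversal[of "E - X"] r_add_rank unfolding nullity_def by simp
qed

lemma card_Aset_le_nullity:
  assumes "X \<subseteq> E"
  shows "int (card (Aset A r X)) \<le> nullity ind X"
  using rank_partial_transversal_le[OF finite_ground, of A r "E - X"] card_Aset_add_meeting[OF assms]
    rank_partial_transversal_compl[OF assms] by linarith

text \<open>The complement of a flat \<open>Z\<close> has no coloops in the dual matroid, so every set of the
  presentation meeting it is matched; this gives the reverse inequality.\<close>

lemma nullity_flat:
  assumes Z: "flat E ind Z"
  shows "nullity ind Z = int (card (Aset A r Z))"
proof -
  let ?rk = "rank (partial_transversal E A r)"
  have ZE: "Z \<subseteq> E"
    using Z unfolding flat_def by blast
  have "?rk (E - Z - {y}) = ?rk (E - Z)" if y: "y \<in> E - Z" for y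
  proof -
    have "y \<notin> cl E ind Z"
      using Z y unfolding flat_def by blast
    then have "nullity ind (insert y Z) = nullity ind Z"
      using nullity_insert_not_cl y ZE finite_ground finite_subset by blast
    moreover have "E - Z - {y} = E - insert y Z"
      by blast
    ultimately show ?thesis
      using rank_partial_transversal_compl[of "insert y Z"] rank_partial_transversal_compl[OF ZE] y ZE
      by simp
  qed
  then have "card {i \<in> {1..r}. A i \<inter> (E - Z) \<noteq> {}} \<le> ?rk (E - Z)"
    by (intro card_meeting_le_rank_partial_transversal[OF finite_ground]) auto
  then show ?thesis
    using card_Aset_le_nullity[OF ZE] card_Aset_add_meeting[OF ZE] rank_partial_transversal_compl[OF ZE]
    by linarith
qed

lemma card_Aset_Diff_pair:
  assumes W: "flat E ind W" and "e \<in> W" "x \<in> W" "x \<noteq> e"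
    and e_cl: "e \<in> cl E ind (W - {e})" and x_cl: "x \<in> cl E ind (W - {x})"
    and x_coloop: "x \<notin> cl E ind (W - {e} - {x})"
  shows "card (Aset A r W) = card (Aset A r (W - {e} - {x})) + 1"
proof -
  have WE: "W \<subseteq> E" and finW: "finite W"
    using W finite_ground finite_subset unfolding flat_def by blast+
  have "nullity ind W = nullity ind (W - {e}) + 1"
    using nullity_insert_cl[OF e_cl] finW \<open>e \<in> W\<close> by (simp add: insert_absorb)
  moreover have "nullity ind (W - {e}) = nullity ind (W - {e} - {x})"
    using nullity_insert_not_cl[OF _ x_coloop] assms(2-4) WE finW by (simp add: insert_absorb subset_iff)
  ultimately show ?thesis
    using nullity_flat[OF W] nullity_flat[OF flat_Diff_pair[OF W x_cl x_coloop]] by simp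
qed

end

locale max_cotransversal = cotransversal +
  assumes maximal: "maximal_presentation E ind A r"
begin

lemma presentation_cyclic_flat: "i \<in> {1..r} \<Longrightarrow> cyclic_flat E ind (A i)"
  using maximal unfolding maximal_presentation_def by blast

lemma presentation_mem_cl:
  assumes "i \<in> {1..r}" "x \<in> A i"
  shows "x \<in> cl E ind (A i - {x})"
proof -
  obtain C where "circuit E ind C" "x \<in> C" "C \<subseteq> A i"
    using presentation_cyclic_flat[OF assms(1)] assms(2) unfolding cyclic_flat_def by blast
  then show ?thesis
    using circuit_mem_cl by blast
qed

lemma mem_cl_if_Ae:
  assumes "i \<in> Ae A r e (insert e X)"
  shows "e \<in> cl E ind X"
  using presentation_mem_cl[of i e] cl_mono[of "A i - {e}" X] assms unfolding Ae_iff by blast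

text \<open>If \<open>x\<close> were a coloop of \<open>cl (A i \<union> A j) - e\<close>, then removing \<open>e\<close> and \<open>x\<close> from the flat
  \<open>cl (A i \<union> A j)\<close> would leave a flat and lose only one set of the presentation, yet both \<open>A i\<close>
  and \<open>A j\<close> are lost.\<close>

lemma circuit_in_pair_closure:
  assumes i: "i \<in> Ae A r e E" and j: "j \<in> Ae A r e E" and distinct: "i \<noteq> j"
    and x: "x \<in> A i \<union> A j" "x \<noteq> e"
  shows "\<exists>C. circuit E ind C \<and> x \<in> C \<and> C \<subseteq> cl E ind (A i \<union> A j) - {e}"
proof (rule ccontr)
  assume no_circuit: "\<not> ?thesis"
  define W where "W = cl E ind (A i \<union> A j)"
  have ij: "i \<in> {1..r}" "e \<in> A i" "j \<in> {1..r}" "e \<in> A j"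
    using i j unfolding Ae_iff by auto
  have AE: "A i \<union> A j \<subseteq> E"
    using presentation_subset ij by auto
  have AW: "A i \<union> A j \<subseteq> W"
    unfolding W_def using subset_cl[OF AE] .
  have "x \<notin> cl E ind (W - {e} - {x})"
  proof
    assume "x \<in> cl E ind (W - {e} - {x})"
    then obtain C where "circuit E ind C" "x \<in> C" "C \<subseteq> insert x (W - {e} - {x})"
      using circuit_of_mem_cl by blast
    then show False
      using no_circuit x AW unfolding W_def by blast
  qed
  moreover have "x \<in> cl E ind (W - {x})"
  proof -
    obtain k where "k \<in> {1..r}" "x \<in> A k" "A k \<subseteq> W"
      using x ij AW by blast
    then show ?thesis
      using presentation_mem_cl cl_mono[of "A k - {x}" "W - {x}"] by blast
  qed
  moreover have "e \<in> cl E ind (W - {e})"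
    using presentation_mem_cl[OF ij(1,2)] cl_mono[of "A i - {e}" "W - {e}"] AW by blast
  ultimately have "card (Aset A r W) = card (Aset A r (W - {e} - {x})) + 1"
    using card_Aset_Diff_pair[OF flat_cl[OF AE]] x AW ij unfolding W_def by blast
  moreover have "card (Aset A r (W - {e} - {x})) + 2 \<le> card (Aset A r W)"
  proof -
    have sub: "insert i (insert j (Aset A r (W - {e} - {x}))) \<subseteq> Aset A r W"
      using ij AW unfolding Aset_def by blast
    have "i \<notin> Aset A r (W - {e} - {x})" "j \<notin> Aset A r (W - {e} - {x})"
      using ij unfolding Aset_def by blast+
    then have "card (insert i (insert j (Aset A r (W - {e} - {x})))) = card (Aset A r (W - {e} - {x})) + 2"
      using distinct by (simp add: finite_Aset)
    then show ?thesis
      using card_mono[OF finite_Aset sub] by simp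
  qed
  ultimately show False
    by simp
qed

lemma cyclic_flat_pair_closure_del:
  assumes i: "i \<in> Ae A r e E" and j: "j \<in> Ae A r e E" and distinct: "i \<noteq> j"
  shows "cyclic_flat (E - {e}) (del_indep ind e) (cl (E - {e}) (del_indep ind e) (A i \<union> A j - {e}))"
proof -
  define X where "X = A i \<union> A j"
  define W where "W = cl E ind X"
  have ij: "i \<in> {1..r}" "e \<in> A i" "j \<in> {1..r}"
    using i j unfolding Ae_iff by auto
  have XE: "X \<subseteq> E"
    unfolding X_def using presentation_subset ij by auto
  have "e \<in> cl E ind (X - {e})"
    using presentation_mem_cl[OF ij(1,2)] cl_mono[of "A i - {e}" "X - {e}"] unfolding X_def by blast
  then have clX: "cl E ind (X - {e}) = W"
    unfolding W_def by (rule cl_Diff_eq[OF XE])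
  have WE: "W \<subseteq> E" and XW: "X \<subseteq> W"
    unfolding W_def using cl_subset_ground subset_cl[OF XE] by auto
  have "cl E ind (W - {e}) \<subseteq> W"
    using cl_subset_flat[OF _ flat_cl[OF XE]] unfolding W_def by blast
  then have "cl E ind (W - {e}) - {e} = W - {e}"
    using subset_cl[of "W - {e}"] WE by blast
  moreover have "W - {e} \<subseteq> \<Union>{C. circuit E ind C \<and> C \<subseteq> W - {e}}"
  proof
    fix y
    assume y: "y \<in> W - {e}"
    show "y \<in> \<Union>{C. circuit E ind C \<and> C \<subseteq> W - {e}}"
    proof (cases "y \<in> X")
      case True
      then show ?thesis
        using circuit_in_pair_closure[OF i j distinct, of y] y unfolding X_def W_def by blast
    next
      case False
      then obtain C where "circuit E ind C" "y \<in> C" "C \<subseteq> insert y (X - {e})"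
        using circuit_of_mem_cl[of y "X - {e}"] y clX by blast
      then show ?thesis
        using y XW by blast
    qed
  qed
  ultimately have "cyclic_flat (E - {e}) (del_indep ind e) (W - {e})"
    unfolding cyclic_flat_del_iff using WE by blast
  moreover have "cl (E - {e}) (del_indep ind e) (X - {e}) = W - {e}"
    using cl_del[of "X - {e}" E e] XE clX by auto
  ultimately show ?thesis
    unfolding X_def by simp
qed

lemma cyclic_flat_del_presentation:
  assumes "i \<in> {1..r}" "e \<notin> A i"
  shows "cyclic_flat (E - {e}) (del_indep ind e) (A i)"
proof -
  have "A i \<subseteq> E" "cl E ind (A i) = A i" "A i = \<Union>{C. circuit E ind C \<and> C \<subseteq> A i}"
    using presentation_cyclic_flat[OF assms(1)] unfolding cyclic_flat_def flat_def by auto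
  moreover have "A i - {e} = A i"
    using assms(2) by blast
  ultimately show ?thesis
    unfolding cyclic_flat_del_iff by auto
qed

end

lemma max_cotransversalI:
  assumes "matroid E ind" "\<forall>X. dual_indep E ind X \<longleftrightarrow> partial_transversal E A r X"
    "r = rank (dual_indep E ind) E" "maximal_presentation E ind A r"
  shows "max_cotransversal E ind A r"
proof -
  have "A i \<subseteq> E" if "i \<in> {1..r}" for i
    using assms(4) that unfolding maximal_presentation_def cyclic_flat_def flat_def by blast
  then show ?thesis
    using assms by (intro max_cotransversal.intro cotransversal.intro finite_matroid.intro
        cotransversal_axioms.intro max_cotransversal_axioms.intro)
qed

context finite_matroid
begin

lemma connected_graph_Ae_flat:
  assumes G: "presenting E ind A r e Ed" and Z: "flat E ind Z"
  shows "connected_graph (Ae A r e Z) (induced Ed (Ae A r e Z))"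
  unfolding connected_graph_def
proof (intro ballI)
  fix u v
  assume u: "u \<in> Ae A r e Z" and v: "v \<in> Ae A r e Z"
  let ?R = "{(x, y). {x, y} \<in> induced Ed (Ae A r e Z)}"
  show "(u, v) \<in> ?R\<^sup>*"
  proof (cases "u = v")
    case False
    let ?U = "Ae A r e (cl E ind (A u \<union> A v))"
    have ZE: "Z \<subseteq> E"
      using Z unfolding flat_def by blast
    have uv: "A u \<union> A v \<subseteq> Z"
      using u v unfolding Ae_iff by blast
    have "u \<in> Ae A r e E" "v \<in> Ae A r e E"
      using u v Ae_mono[OF ZE] by blast+
    then have "connected_graph ?U (induced Ed ?U)"
      using G False unfolding presenting_def Let_def by blast
    moreover have "A u \<union> A v \<subseteq> cl E ind (A u \<union> A v)"
      using uv ZE by (intro subset_cl) blast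
    then have "u \<in> ?U" "v \<in> ?U"
      using u v unfolding Ae_iff by auto
    ultimately have "(u, v) \<in> {(x, y). {x, y} \<in> induced Ed ?U}\<^sup>*"
      unfolding connected_graph_def by blast
    moreover have "?U \<subseteq> Ae A r e Z"
      using cl_subset_flat[OF uv(1) Z] unfolding Ae_def Aset_def by blast
    then have "{(x, y). {x, y} \<in> induced Ed ?U} \<subseteq> ?R"
      unfolding induced_def by blast
    ultimately show ?thesis
      using rtrancl_mono by blast
  qed simp
qed

lemma card_edges_presenting_tree:
  assumes G: "presenting E ind A r e Ed" and Z: "flat E ind Z" and "Ae A r e Z \<noteq> {}"
    and forest: "acyclic_graph (induced Ed (Ae A r e Z))"
  shows "Suc (card (induced Ed (Ae A r e Z))) = card (Ae A r e Z)"
proof (rule card_edges_tree[OF finite_Ae \<open>Ae A r e Z \<noteq> {}\<close> _ forest])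
  show "simple_graph_on (Ae A r e Z) (induced Ed (Ae A r e Z))"
    using G simple_graph_on_induced unfolding presenting_def by blast
  show "connected_graph (Ae A r e Z) (induced Ed (Ae A r e Z))"
    by (rule connected_graph_Ae_flat[OF G Z])
qed

end

section \<open>The function alpha of the deletion\<close>

lemma sum_card_fibres:
  assumes "finite S" "finite T" "g ` S \<subseteq> T"
  shows "(\<Sum>y\<in>T. card {x \<in> S. g x = y}) = card S"
  using sum.group[OF assms, of "\<lambda>_. 1::nat"] by simp

lemma alpha_eq_if_sum_eq_nullity:
  assumes "finite F" "cyclic_flat E ind F"
    and sum_eq: "\<And>X. cyclic_flat E ind X \<Longrightarrow> X \<subseteq> F \<Longrightarrow>
      (\<Sum>Y | cyclic_flat E ind Y \<and> Y \<subseteq> X. g Y) = nullity ind X"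
  shows "alpha E ind F = g F"
  using assms
proof (induction F rule: finite_psubset_induct)
  case (psubset F)
  let ?below = "{Y. cyclic_flat E ind Y \<and> Y \<subset> F}"
  have IH: "alpha E ind Y = g Y" if "Y \<in> ?below" for Y
    using that psubset.IH[of Y] psubset.prems(2) by auto
  have "?below \<subseteq> Pow F"
    by blast
  then have "finite ?below"
    using psubset.hyps(1) finite_subset by blast
  moreover have "{Y. cyclic_flat E ind Y \<and> Y \<subseteq> F} = insert F ?below"
    using psubset.prems(1) by auto
  ultimately have "g F + (\<Sum>Y\<in>?below. g Y) = nullity ind F"
    using psubset.prems(2)[OF psubset.prems(1) order_refl] by simp
  moreover have "alpha E ind F = nullity ind F - (\<Sum>Y\<in>?below. alpha E ind Y)"
    unfolding nullity_def by (subst alpha.simps) (simp add: psubset.hyps del: alpha.simps)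
  ultimately show ?case
    using sum.cong[OF refl IH, of ?below] by (simp del: alpha.simps)
qed

context max_cotransversal
begin

text \<open>If \<open>e \<in> cl F\<close>, then \<open>F + e\<close> is a flat of \<open>M\<close> whose nullity exceeds that of \<open>F\<close> by one,
  and the sets \<open>A i\<close> inside \<open>F + e\<close> but not inside \<open>F\<close> are the vertices of the tree
  \<open>G[\<A>\<^sub>e(F + e)]\<close>.\<close>

lemma nullity_cyclic_flat_del:
  assumes G: "presenting E ind A r e Ed"
    and F: "cyclic_flat (E - {e}) (del_indep ind e) F"
    and forest: "acyclic_graph (induced Ed (Ae A r e (F \<union> {e})))"
  shows "nullity ind F = int (card (Aset A r F)) + int (card (induced Ed (Ae A r e (F \<union> {e}))))"
proof -
  let ?V = "Ae A r e (insert e F)"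
  have FE: "F \<subseteq> E - {e}" and clF: "cl E ind F - {e} = F"
    using F unfolding cyclic_flat_del_iff by blast+
  have Fe: "F \<union> {e} = insert e F"
    by blast
  show ?thesis
  proof (cases "e \<in> cl E ind F")
    case False
    then have "?V = {}"
      using mem_cl_if_Ae by blast
    moreover have "flat E ind F"
      using FE clF False unfolding flat_def by blast
    moreover have "induced Ed {} = {}"
      using G induced_empty_if_card_le_1[of "Ae A r e E" Ed "{}"] unfolding presenting_def by simp
    ultimately show ?thesis
      using nullity_flat Fe by simp
  next
    case True
    then have "cl E ind F = insert e F"
      using clF subset_cl[of F] FE by blast
    moreover have "F \<subseteq> E"
      using FE by blast
    ultimately have flat: "flat E ind (insert e F)"
      using flat_cl[of F] by simp
    have "e \<notin> F" "finite F"
      using FE finite_ground finite_subset by blast+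
    then have nullity_insert: "nullity ind (insert e F) = nullity ind F + 1"
      by (rule nullity_insert_cl[OF True])
    moreover have card_split: "card (Aset A r (insert e F)) = card (Aset A r F) + card ?V"
      using card_Aset_insert \<open>e \<notin> F\<close> .
    moreover have "int (card (Aset A r F)) \<le> nullity ind F"
      using card_Aset_le_nullity FE by blast
    ultimately have "?V \<noteq> {}"
      using nullity_flat[OF flat] by auto
    then have "Suc (card (induced Ed ?V)) = card ?V"
      using card_edges_presenting_tree[OF G flat] forest Fe by simp
    then show ?thesis
      using nullity_flat[OF flat] nullity_insert card_split Fe by simp
  qed
qed

definition spanning_edges :: "'a \<Rightarrow> nat set set \<Rightarrow> 'a set \<Rightarrow> nat set set" where
  "spanning_edges e Ed F = {ed \<in> induced Ed (Ae A r e (F \<union> {e})).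
     \<exists>i j. ed = {i, j} \<and> cl (E - {e}) (del_indep ind e) (A i \<union> A j - {e}) = F}"

lemma finite_cyclic_flats_below:
  assumes "F \<subseteq> E"
  shows "finite {F'. cyclic_flat (E - {e}) (del_indep ind e) F' \<and> F' \<subseteq> F}"
proof -
  have "{F'. cyclic_flat (E - {e}) (del_indep ind e) F' \<and> F' \<subseteq> F} \<subseteq> Pow F"
    by blast
  then show ?thesis
    using assms finite_ground finite_subset by (metis finite_Pow_iff)
qed

lemma sum_card_presentation_sets:
  assumes F: "cyclic_flat (E - {e}) (del_indep ind e) F"
  shows "(\<Sum>F' | cyclic_flat (E - {e}) (del_indep ind e) F' \<and> F' \<subseteq> F.
      card {k \<in> Aset A r F'. A k = F'}) = card (Aset A r F)"
proof -
  let ?Z = "{F'. cyclic_flat (E - {e}) (del_indep ind e) F' \<and> F' \<subseteq> F}"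
  have FE: "F \<subseteq> E - {e}"
    using F unfolding cyclic_flat_del_iff by blast
  have img: "A ` Aset A r F \<subseteq> ?Z"
  proof
    fix F'
    assume "F' \<in> A ` Aset A r F"
    then obtain k where k: "k \<in> {1..r}" "A k \<subseteq> F" "F' = A k"
      unfolding Aset_def by blast
    then have "e \<notin> A k"
      using FE by blast
    then show "F' \<in> ?Z"
      using cyclic_flat_del_presentation k by blast
  qed
  have "F \<subseteq> E"
    using FE by blast
  have "(\<Sum>F'\<in>?Z. card {k \<in> Aset A r F. A k = F'}) = card (Aset A r F)"
    by (rule sum_card_fibres[OF finite_Aset finite_cyclic_flats_below[OF \<open>F \<subseteq> E\<close>] img])
  moreover have "{k \<in> Aset A r F. A k = F'} = {k \<in> Aset A r F'. A k = F'}" if "F' \<in> ?Z" for F'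
    using that unfolding Aset_def by auto
  ultimately show ?thesis
    by simp
qed

definition edge_flat :: "'a \<Rightarrow> nat set \<Rightarrow> 'a set" where
  "edge_flat e ed = cl (E - {e}) (del_indep ind e) (\<Union>(A ` ed) - {e})"

lemma edge_flat_cyclic_flat_below:
  assumes G: "presenting E ind A r e Ed" and F: "cyclic_flat (E - {e}) (del_indep ind e) F"
    and ed: "ed \<in> induced Ed (Ae A r e (F \<union> {e}))"
  shows "cyclic_flat (E - {e}) (del_indep ind e) (edge_flat e ed) \<and> edge_flat e ed \<subseteq> F"
proof -
  obtain i j where ij: "i \<in> Ae A r e E" "j \<in> Ae A r e E" "i \<noteq> j" "ed = {i, j}"
    using presenting_edgeE[OF G] ed unfolding induced_def by blast
  then have flat_eq: "edge_flat e ed = cl (E - {e}) (del_indep ind e) (A i \<union> A j - {e})"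
    unfolding edge_flat_def by simp
  have "i \<in> Ae A r e (F \<union> {e})" "j \<in> Ae A r e (F \<union> {e})"
    using ed ij(4) unfolding induced_def by auto
  then have "A i \<union> A j - {e} \<subseteq> F"
    unfolding Ae_iff by blast
  then show ?thesis
    unfolding flat_eq using cyclic_flat_pair_closure_del[OF ij(1-3)] cl_del_subset_cyclic_flat[OF _ F]
    by blast
qed

lemma spanning_edges_eq_fibre:
  assumes G: "presenting E ind A r e Ed" and "F' \<subseteq> F"
  shows "spanning_edges e Ed F' = {ed \<in> induced Ed (Ae A r e (F \<union> {e})). edge_flat e ed = F'}"
proof (intro equalityI subsetI)
  fix ed
  assume "ed \<in> spanning_edges e Ed F'"
  then obtain i j where ed: "ed \<in> Ed" "ed \<subseteq> Ae A r e (F' \<union> {e})" "ed = {i, j}"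
    "cl (E - {e}) (del_indep ind e) (A i \<union> A j - {e}) = F'"
    unfolding spanning_edges_def induced_def by blast
  moreover have "Ae A r e (F' \<union> {e}) \<subseteq> Ae A r e (F \<union> {e})"
    using assms(2) by (intro Ae_mono) blast
  ultimately show "ed \<in> {ed \<in> induced Ed (Ae A r e (F \<union> {e})). edge_flat e ed = F'}"
    unfolding induced_def edge_flat_def by auto
next
  fix ed
  assume "ed \<in> {ed \<in> induced Ed (Ae A r e (F \<union> {e})). edge_flat e ed = F'}"
  then have ed: "ed \<in> Ed" "edge_flat e ed = F'"
    unfolding induced_def by auto
  then obtain i j where ij: "i \<in> Ae A r e E" "j \<in> Ae A r e E" "ed = {i, j}"
    using presenting_edgeE[OF G] by metis
  then have cl_eq: "cl (E - {e}) (del_indep ind e) (A i \<union> A j - {e}) = F'"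
    using ed(2) unfolding edge_flat_def by simp
  have "A i \<union> A j - {e} \<subseteq> E - {e}"
    using ij(1,2) unfolding Ae_iff by blast
  then have "A i \<union> A j - {e} \<subseteq> F'"
    using subset_cl_del cl_eq by blast
  then have "i \<in> Ae A r e (F' \<union> {e})" "j \<in> Ae A r e (F' \<union> {e})"
    using ij(1,2) unfolding Ae_iff by blast+
  then have "ed \<in> induced Ed (Ae A r e (F' \<union> {e}))"
    unfolding induced_def using ed(1) ij(3) by blast
  then show "ed \<in> spanning_edges e Ed F'"
    unfolding spanning_edges_def using ij(3) cl_eq by blast
qed

lemma sum_card_spanning_edges:
  assumes G: "presenting E ind A r e Ed" and F: "cyclic_flat (E - {e}) (del_indep ind e) F"
  shows "(\<Sum>F' | cyclic_flat (E - {e}) (del_indep ind e) F' \<and> F' \<subseteq> F.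
      card (spanning_edges e Ed F')) = card (induced Ed (Ae A r e (F \<union> {e})))"
proof -
  let ?Z = "{F'. cyclic_flat (E - {e}) (del_indep ind e) F' \<and> F' \<subseteq> F}"
  let ?S = "induced Ed (Ae A r e (F \<union> {e}))"
  have "?S \<subseteq> Pow (Ae A r e (F \<union> {e}))"
    unfolding induced_def by blast
  then have finS: "finite ?S"
    by (meson finite_Ae finite_Pow_iff finite_subset)
  have FE: "F \<subseteq> E"
    using F unfolding cyclic_flat_del_iff by blast
  have img: "edge_flat e ` ?S \<subseteq> ?Z"
    using edge_flat_cyclic_flat_below[OF G F] by blast
  have "(\<Sum>F'\<in>?Z. card (spanning_edges e Ed F')) = (\<Sum>F'\<in>?Z. card {ed \<in> ?S. edge_flat e ed = F'})"
    using spanning_edges_eq_fibre[OF G] by (intro sum.cong) auto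
  also have "\<dots> = card ?S"
    by (rule sum_card_fibres[OF finS finite_cyclic_flats_below[OF FE] img])
  finally show ?thesis .
qed

lemma spanning_edges_empty:
  assumes "presenting E ind A r e Ed" "card (Ae A r e (F \<union> {e})) \<le> 1"
  shows "spanning_edges e Ed F = {}"
proof -
  have "simple_graph_on (Ae A r e E) Ed"
    using assms(1) unfolding presenting_def by (rule conjunct1)
  then have "induced Ed (Ae A r e (F \<union> {e})) = {}"
    using induced_empty_if_card_le_1[OF _ finite_Ae assms(2)] by blast
  then show ?thesis
    unfolding spanning_edges_def by simp
qed

lemma presentation_sets_eq_empty:
  assumes F: "cyclic_flat (E - {e}) (del_indep ind e) F" and "Ae A r e (F \<union> {e}) \<noteq> {}"
  shows "{i \<in> Aset A r F. A i = F} = {}"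
proof -
  obtain i where "i \<in> Ae A r e (insert e F)"
    using assms(2) by auto
  then have "e \<in> cl E ind F"
    by (rule mem_cl_if_Ae)
  moreover have "e \<notin> F"
    using F unfolding cyclic_flat_del_iff by blast
  ultimately have "A k \<noteq> F" if "k \<in> {1..r}" for k
    using presentation_cyclic_flat[OF that] unfolding cyclic_flat_def flat_def by blast
  then show ?thesis
    unfolding Aset_def by blast
qed

lemma alpha_del:
  assumes G: "presenting E ind A r e Ed"
    and F: "cyclic_flat (E - {e}) (del_indep ind e) F"
    and forest: "acyclic_graph (induced Ed (Ae A r e (F \<union> {e})))"
  shows "alpha (E - {e}) (del_indep ind e) F =
    int (card {k \<in> Aset A r F. A k = F}) + int (card (spanning_edges e Ed F))"
proof (rule alpha_eq_if_sum_eq_nullity)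
  have "F \<subseteq> E"
    using F unfolding cyclic_flat_del_iff by blast
  then show "finite F"
    using finite_ground finite_subset by blast
  show "cyclic_flat (E - {e}) (del_indep ind e) F"
    by (rule F)
next
  fix X
  assume X: "cyclic_flat (E - {e}) (del_indep ind e) X" "X \<subseteq> F"
  have "induced Ed (Ae A r e (X \<union> {e})) \<subseteq> induced Ed (Ae A r e (F \<union> {e}))"
    using Ae_mono[of "X \<union> {e}" "F \<union> {e}"] X(2) unfolding induced_def by blast
  then have "acyclic_graph (induced Ed (Ae A r e (X \<union> {e})))"
    using acyclic_graph_subset forest by blast
  moreover have "e \<notin> X"
    using X(1) unfolding cyclic_flat_del_iff by blast
  ultimately show "(\<Sum>Y | cyclic_flat (E - {e}) (del_indep ind e) Y \<and> Y \<subseteq> X.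
      int (card {k \<in> Aset A r Y. A k = Y}) + int (card (spanning_edges e Ed Y)))
    = nullity (del_indep ind e) X"
    using sum_card_presentation_sets[OF X(1)] sum_card_spanning_edges[OF G X(1)]
      nullity_cyclic_flat_del[OF G X(1)] nullity_del[of e X ind]
    by (simp add: sum.distrib flip: of_nat_sum)
qed

end

theorem lemma3p3:
  fixes E :: "'a set" and ind :: "'a set \<Rightarrow> bool" and A :: "nat \<Rightarrow> 'a set"
    and r :: nat and e :: 'a and Ed :: "nat set set" and F :: "'a set"
  assumes M: "matroid E ind"
    and dual_transversal: "\<forall>X. dual_indep E ind X \<longleftrightarrow> partial_transversal E A r X"
    and r_def: "r = rank (dual_indep E ind) E"
    and maxpres: "maximal_presentation E ind A r"
    and e: "e \<in> E"
    and G: "minimal_presenting E ind A r e Ed"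
    and F: "cyclic_flat (E - {e}) (del_indep ind e) F"
    and forest: "acyclic_graph (induced Ed (Ae A r e (F \<union> {e})))"
  shows "(card (Ae A r e (F \<union> {e})) \<le> 1 \<longrightarrow>
            alpha (E - {e}) (del_indep ind e) F = int (card {i \<in> Aset A r F. A i = F}))
       \<and> (card (Ae A r e (F \<union> {e})) > 1 \<longrightarrow>
            alpha (E - {e}) (del_indep ind e) F =
              int (card {ed \<in> induced Ed (Ae A r e (F \<union> {e})).
                 \<exists>i j. ed = {i, j} \<and> cl (E - {e}) (del_indep ind e) (A i \<union> A j - {e}) = F}))"
proof -
  interpret max_cotransversal E ind A r
    by (rule max_cotransversalI[OF M dual_transversal r_def maxpres])
  have presenting: "presenting E ind A r e Ed"
    using G unfolding minimal_presenting_def by blast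
  have alpha: "alpha (E - {e}) (del_indep ind e) F =
      int (card {i \<in> Aset A r F. A i = F}) + int (card (spanning_edges e Ed F))"
    by (rule alpha_del[OF presenting F forest])
  show ?thesis
  proof (intro conjI impI)
    assume "card (Ae A r e (F \<union> {e})) \<le> 1"
    then have "spanning_edges e Ed F = {}"
      by (rule spanning_edges_empty[OF presenting])
    then show "alpha (E - {e}) (del_indep ind e) F = int (card {i \<in> Aset A r F. A i = F})"
      using alpha by (simp del: alpha.simps)
  next
    assume "card (Ae A r e (F \<union> {e})) > 1"
    then have "Ae A r e (F \<union> {e}) \<noteq> {}"
      by auto
    then have no_set: "{i \<in> Aset A r F. A i = F} = {}"
      by (rule presentation_sets_eq_empty[OF F])
    show "alpha (E - {e}) (del_indep ind e) F =
        int (card {ed \<in> induced Ed (Ae A r e (F \<union> {e})).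
          \<exists>i j. ed = {i, j} \<and> cl (E - {e}) (del_indep ind e) (A i \<union> A j - {e}) = F})"
      using alpha unfolding spanning_edges_def no_set by (simp del: alpha.simps)
  qed
qed

end
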